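(* If $k$ is odd and $U$ is a $k$-unitrade, then $|U|$ is even.
   Context: A $k$-unitrade on a finite set $V$ is a set $U$ of $k$-element subsets (blocks) of $V$ such that every $(k-1)$-element subset of $V$ is contained in an even number of blocks of $U$. *)

theory Defs
  imports Main
begin

definition unitrade :: "nat \<Rightarrow> 'a set \<Rightarrow> 'a set set \<Rightarrow> bool" where
  "unitrade k V U \<longleftrightarrow>
     finite V \<and> (\<forall>B\<in>U. B \<subseteq> V \<and> card B = k) \<and>
     (\<forall>S. S \<subseteq> V \<longrightarrow> card S = k - 1 \<longrightarrow> even (card {B\<in>U. S \<subseteq> B}))"

end

theory Submission
  imports Defs
begin

text \<open>Count the incidences between the blocks of \<open>U\<close> and the \<open>(k-1)\<close>-subsets of \<open>V\<close>.
Each block contains exactly \<open>k\<close> such subsets, so there are \<open>k * card U\<close> incidences; each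
subset lies in an even number of blocks, so the number of incidences is even. For odd \<open>k\<close>
this forces \<open>card U\<close> to be even.\<close>

lemma sum_card_filter_swap:
  assumes "finite A" "finite B"
  shows "(\<Sum>a\<in>A. card {b\<in>B. R a b}) = (\<Sum>b\<in>B. card {a\<in>A. R a b})"
proof -
  have "(\<Sum>a\<in>A. card {b\<in>B. R a b}) = (\<Sum>a\<in>A. \<Sum>b\<in>B. if R a b then 1 else 0)"
    using assms(2) by (simp add: sum.If_cases Collect_conj_eq Int_commute)
  also have "\<dots> = (\<Sum>b\<in>B. \<Sum>a\<in>A. if R a b then 1 else 0)"
    by (rule sum.swap)
  also have "\<dots> = (\<Sum>b\<in>B. card {a\<in>A. R a b})"
    using assms(1) by (simp add: sum.If_cases Collect_conj_eq Int_commute)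
  finally show ?thesis .
qed

lemma card_subsets_card_pred:
  assumes "finite B" "card B = k" "k \<ge> 1"
  shows "card {S. S \<subseteq> B \<and> card S = k - 1} = k"
proof -
  have "card {S. S \<subseteq> B \<and> card S = k - 1} = k choose (k - 1)"
    using assms(1,2) by (simp add: n_subsets)
  also have "\<dots> = k choose 1"
    using assms(3) by (metis binomial_symmetric diff_diff_cancel diff_le_self)
  finally show ?thesis by simp
qed

lemma unitrade_finite:
  assumes "unitrade k V U"
  shows "finite U"
proof -
  have "U \<subseteq> Pow V" and "finite V"
    using assms unfolding unitrade_def by auto
  then show ?thesis by (meson finite_Pow_iff finite_subset)
qed

lemma unitrade_incidence_count:
  assumes "unitrade k V U" "k \<ge> 1"
  shows "k * card U = (\<Sum>S\<in>{S. S \<subseteq> V \<and> card S = k - 1}. card {B\<in>U. S \<subseteq> B})"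
    (is "_ = (\<Sum>S\<in>?T. _)")
proof -
  have fV: "finite V" and blocks: "\<And>B. B \<in> U \<Longrightarrow> B \<subseteq> V \<and> card B = k"
    using assms(1) unfolding unitrade_def by auto
  have "card {S\<in>?T. S \<subseteq> B} = k" if "B \<in> U" for B
  proof -
    have "{S\<in>?T. S \<subseteq> B} = {S. S \<subseteq> B \<and> card S = k - 1}"
      using blocks[OF that] by auto
    also have "card \<dots> = k"
      using blocks[OF that] fV finite_subset assms(2) by (intro card_subsets_card_pred) auto
    finally show ?thesis .
  qed
  then have "k * card U = (\<Sum>B\<in>U. card {S\<in>?T. S \<subseteq> B})"
    by simp
  also have "\<dots> = (\<Sum>S\<in>?T. card {B\<in>U. S \<subseteq> B})"
    using unitrade_finite[OF assms(1)] fV by (simp add: sum_card_filter_swap)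
  finally show ?thesis .
qed

theorem proposition11:
  fixes k :: nat and V :: "'a set" and U :: "'a set set"
  assumes "odd k" and "unitrade k V U"
  shows "even (card U)"
proof -
  have "k \<ge> 1"
    using assms(1) by (cases k) auto
  with assms(2) have count:
    "k * card U = (\<Sum>S\<in>{S. S \<subseteq> V \<and> card S = k - 1}. card {B\<in>U. S \<subseteq> B})"
    by (rule unitrade_incidence_count)
  have "even (\<Sum>S\<in>{S. S \<subseteq> V \<and> card S = k - 1}. card {B\<in>U. S \<subseteq> B})"
    using assms(2) unfolding unitrade_def by (intro dvd_sum) auto
  then have "even (k * card U)"
    by (simp only: count)
  then show ?thesis
    using assms(1) by simp
qed

end
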